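(* Let $a,b,c,L_F>0$ and let $\gamma$ be a real number with $2c<\gamma<a-c$. Then the following hold. (1) For all $p\ge 0$, $$r_\gamma(p)=p\bigl(\gamma-c+G(c)-G(\gamma-a+bp)\bigr),$$ and $r_\gamma$ is differentiable on $[0,\infty)$ (one-sided at $0$) with $$r_\gamma'(p)=\gamma-c+G(c)-G(\gamma-a+bp)-bp\,F(\gamma-a+bp).$$ (2) $r_\gamma'$ is $L_r$-Lipschitz on $[0,a/b]$, where $L_r:=2b+abL_F$. (3) $r_\gamma'$ is non-increasing on $[0,\infty)$. (4) There is a unique $p^*_\gamma\in(0,a/b)$ with $r_\gamma'(p^*_\gamma)=0$; moreover $r_\gamma$ is non-decreasing on $[0,p^*_\gamma]$ and non-increasing on $[p^*_\gamma,a/b]$ (so $p^*_\gamma$ maximizes $r_\gamma$ on $[0,a/b]$). (5) With $C_s:=L_r/2$, for all $p\in[0,a/b]$: $r_\gamma(p^*_\gamma)-r_\gamma(p)\le C_s(p^*_\gamma-p)^2$. (6) There exists a constant $C_\epsilon>0$ depending only on $a,b,c,L_F$ (and not on $\gamma$), and for each such $\gamma$ there exists $\epsilon_\gamma$ with $0<\epsilon_\gamma\le\min\{p^*_\gamma,\,a/b-p^*_\gamma\}$, such that for all $p_1,p_2\in[p^*_\gamma-\epsilon_\gamma,p^*_\gamma+\epsilon_\gamma]$: $|r_\gamma'(p_1)-r_\gamma'(p_2)|\ge C_\epsilon|p_1-p_2|$. (7) With $C_v:=C_s/C_\epsilon^2$ (depending only on $a,b,c,L_F$), for all $p\in(p^*_\gamma-\epsilon_\gamma,p^*_\gamma+\epsilon_\gamma)$: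 $r_\gamma(p^*_\gamma)-r_\gamma(p)\le C_v\,(r_\gamma'(p))^2$.
   Context: Let $N$ be a real random variable taking values in $[-c,c]$ with $\mathbb{E}[N]=0$, whose cumulative distribution function $F$ is $L_F$-Lipschitz (so $F(-c)=0$, $F(c)=1$; no density is assumed). Define the integrated CDF $G(x):=\int_{-\infty}^x F(\omega)\,d\omega$ for $x\in\mathbb{R}$. The potential demand at price $p$ is $a-bp+N$, the inventory level is $\gamma$, and the observed (censored) demand is $\min\{\gamma,a-bp+N\}$. The expected revenue function is $r_\gamma(p):=p\cdot\mathbb{E}_N\bigl[\min\{\gamma,\,a-bp+N\}\bigr]$ for $p\ge 0$, and $r_\gamma'$ denotes its derivative in $p$. *)

theory Defs
  imports "HOL-Analysis.Analysis" "HOL-Probability.Probability"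
begin

definition cdfN :: "'a measure \<Rightarrow> ('a \<Rightarrow> real) \<Rightarrow> real \<Rightarrow> real" where
  "cdfN M N x = measure M {\<omega> \<in> space M. N \<omega> \<le> x}"

definition intcdf :: "'a measure \<Rightarrow> ('a \<Rightarrow> real) \<Rightarrow> real \<Rightarrow> real" where
  "intcdf M N x = integral {..x} (cdfN M N)"

definition revenue :: "'a measure \<Rightarrow> ('a \<Rightarrow> real) \<Rightarrow> real \<Rightarrow> real \<Rightarrow> real \<Rightarrow> real \<Rightarrow> real" where
  "revenue M N a b \<gamma> p = p * (\<integral>\<omega>. min \<gamma> (a - b * p + N \<omega>) \<partial>M)"

definition revenue_der :: "'a measure \<Rightarrow> ('a \<Rightarrow> real) \<Rightarrow> real \<Rightarrow> real \<Rightarrow> real \<Rightarrow> real \<Rightarrow> real \<Rightarrow> real" where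
  "revenue_der M N a b c \<gamma> p =
     \<gamma> - c + intcdf M N c - intcdf M N (\<gamma> - a + b * p) - b * p * cdfN M N (\<gamma> - a + b * p)"

end

theory Submission
  imports Defs
begin

text \<open>
  Write \<open>\<phi>(t) = E[(t - N)\<^sup>+]\<close>. Then \<open>E[min \<gamma> (a - b p + N)] = \<gamma> - \<phi>(\<gamma> - a + b p)\<close>, and the
  increment \<open>\<phi>(u) - \<phi>(s)\<close> is squeezed between \<open>(u - s) F(s)\<close> and \<open>(u - s) F(u)\<close>. Since \<open>F\<close> is
  Lipschitz, \<open>\<phi>\<close> is differentiable with \<open>\<phi>' = F\<close>; hence \<open>\<phi> = G\<close>, and \<open>\<phi>(t) = t\<close> for \<open>t \<ge> c\<close>
  because \<open>E N = 0\<close>.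

  The same squeeze yields, for \<open>0 \<le> p \<le> q\<close>,
  \<open>r\<^sub>\<gamma>'(p) - r\<^sub>\<gamma>'(q) \<ge> b (q - p) (F(t\<^sub>p) + F(t\<^sub>q))\<close> with \<open>t\<^sub>p = \<gamma> - a + b p\<close>. So \<open>r\<^sub>\<gamma>'\<close> is
  non-increasing, goes from \<open>\<gamma> > 0\<close> at \<open>p = 0\<close> to \<open>-a\<close> at \<open>p = a/b\<close>, and at a zero \<open>p\<^sup>*\<close> one has
  \<open>F(t\<^sub>p\<^sub>*) \<ge> c/a\<close>, which makes the zero unique and, by continuity of \<open>F\<close>, gives strong
  monotonicity with the \<open>\<gamma>\<close>-independent constant \<open>b c / a\<close> near \<open>p\<^sup>*\<close>. The quadratic bounds
  follow by comparing \<open>r\<^sub>\<gamma>\<close> with a parabola using the Lipschitz bound on \<open>r\<^sub>\<gamma>'\<close>.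
\<close>

lemma lipschitz_derivative_gap_at_critical_point:
  fixes f f' :: "real \<Rightarrow> real"
  assumes deriv: "\<And>x. x \<in> {l..u} \<Longrightarrow> (f has_real_derivative f' x) (at x)"
    and lip: "L-lipschitz_on {l..u} f'"
    and x0: "x0 \<in> {l..u}" "f' x0 = 0" and p: "p \<in> {l..u}"
  shows "f x0 - f p \<le> L / 2 * (x0 - p)\<^sup>2"
proof -
  define h where "h s = f s + L / 2 * (s - x0)\<^sup>2" for s
  have h_deriv: "(h has_real_derivative f' s + L * (s - x0)) (at s)" if "s \<in> {l..u}" for s
    unfolding h_def using that by (auto intro!: derivative_eq_intros deriv)
  have f'_bound: "\<bar>f' s\<bar> \<le> L * \<bar>s - x0\<bar>" if "s \<in> {l..u}" for s
    using lipschitz_onD[OF lip that x0(1)] x0(2) by (simp add: dist_real_def)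
  have "h x0 \<le> h p"
  proof (cases "p \<le> x0")
    case True
    show ?thesis
    proof (rule DERIV_nonpos_imp_nonincreasing[OF True])
      fix s assume "p \<le> s" "s \<le> x0"
      moreover from this have "s \<in> {l..u}" using p x0 by auto
      ultimately show "\<exists>y. (h has_real_derivative y) (at s) \<and> y \<le> 0"
        using h_deriv[of s] f'_bound[of s]
        by (intro exI[of _ "f' s + L * (s - x0)"] conjI) (auto simp: abs_le_iff right_diff_distrib)
    qed
  next
    case False
    show ?thesis
    proof (rule DERIV_nonneg_imp_nondecreasing[of x0 p])
      show "x0 \<le> p" using False by simp
    next
      fix s assume "x0 \<le> s" "s \<le> p"
      moreover from this have "s \<in> {l..u}" using p x0 by auto
      ultimately show "\<exists>y. (h has_real_derivative y) (at s) \<and> 0 \<le> y"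
        using h_deriv[of s] f'_bound[of s]
        by (intro exI[of _ "f' s + L * (s - x0)"] conjI) (auto simp: abs_le_iff right_diff_distrib)
    qed
  qed
  then show ?thesis by (simp add: h_def power2_commute)
qed

lemma quadratic_gap_le_scaled_square:
  fixes g K C d y :: real
  assumes "g \<le> K * d\<^sup>2" "C * \<bar>d\<bar> \<le> \<bar>y\<bar>" "0 < C" "0 \<le> K"
  shows "g \<le> K / C\<^sup>2 * y\<^sup>2"
proof -
  have "(C * \<bar>d\<bar>)\<^sup>2 \<le> \<bar>y\<bar>\<^sup>2"
    using assms(2,3) by (intro power_mono) auto
  then have "d\<^sup>2 \<le> y\<^sup>2 / C\<^sup>2"
    using assms(3) by (simp add: field_simps)
  then have "K * d\<^sup>2 \<le> K * (y\<^sup>2 / C\<^sup>2)"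
    using assms(4) by (rule mult_left_mono)
  then show ?thesis using assms(1) by simp
qed

locale bounded_noise = prob_space M for M :: "'a measure" +
  fixes N :: "'a \<Rightarrow> real" and c LF :: real
  assumes N_measurable [measurable]: "N \<in> borel_measurable M"
    and N_bounded: "\<And>\<omega>. \<omega> \<in> space M \<Longrightarrow> -c \<le> N \<omega> \<and> N \<omega> \<le> c"
    and N_mean_zero: "(\<integral>\<omega>. N \<omega> \<partial>M) = 0"
    and cdf_lipschitz: "LF-lipschitz_on UNIV (cdfN M N)"
begin

abbreviation F :: "real \<Rightarrow> real" where "F \<equiv> cdfN M N"

definition shortfall :: "real \<Rightarrow> real" where
  "shortfall t = (\<integral>\<omega>. max 0 (t - N \<omega>) \<partial>M)"

lemma cdf_nonneg: "0 \<le> F x"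
  by (simp add: cdfN_def)

lemma cdf_le_1: "F x \<le> 1"
  by (simp add: cdfN_def)

lemma cdf_mono: "x \<le> y \<Longrightarrow> F x \<le> F y"
  unfolding cdfN_def by (rule finite_measure_mono) auto

lemma LF_nonneg: "0 \<le> LF"
  using lipschitz_on_nonneg[OF cdf_lipschitz] .

lemma cdf_lipschitz_abs: "\<bar>F x - F y\<bar> \<le> LF * \<bar>x - y\<bar>"
  using lipschitz_onD[OF cdf_lipschitz] by (simp add: dist_real_def)

lemma cdf_eq_1: "c \<le> x \<Longrightarrow> F x = 1"
proof -
  assume "c \<le> x"
  then have "{\<omega> \<in> space M. N \<omega> \<le> x} = space M" using N_bounded by force
  then show ?thesis by (simp add: cdfN_def prob_space)
qed

lemma cdf_eq_0: "x \<le> -c \<Longrightarrow> F x = 0"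
proof -
  assume x: "x \<le> -c"
  have below: "F y = 0" if "y < -c" for y
  proof -
    have empty: "{\<omega> \<in> space M. N \<omega> \<le> y} = {}" using N_bounded that by force
    show ?thesis unfolding cdfN_def empty by simp
  qed
  have "F x \<le> 0 + e" if "0 < e" for e
  proof -
    define h where "h = e / (LF + 1)"
    have "0 < h" using that LF_nonneg by (simp add: h_def)
    have "F x \<le> F (x - h) + LF * \<bar>x - (x - h)\<bar>"
      using cdf_lipschitz_abs[of x "x - h"] by linarith
    also have "F (x - h) = 0" using below x \<open>0 < h\<close> by simp
    also have "LF * \<bar>x - (x - h)\<bar> \<le> (LF + 1) * h"
      using \<open>0 < h\<close> by simp
    also have "\<dots> = e" using LF_nonneg by (simp add: h_def)
    finally show ?thesis by simp
  qed
  then have "F x \<le> 0" by (rule field_le_epsilon)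
  then show ?thesis using cdf_nonneg[of x] by simp
qed

lemma cdf_eq_integral: "F x = (\<integral>\<omega>. indicator {\<omega> \<in> space M. N \<omega> \<le> x} \<omega> \<partial>M)"
  by (simp add: cdfN_def Int_absorb2 sets.sets_into_space)

lemma c_nonneg: "0 \<le> c"
  using N_bounded not_empty by fastforce

lemma integrable_N: "integrable M N"
  by (rule integrable_const_bound[where B=c]) (use N_bounded in \<open>force simp: abs_le_iff\<close>)+

lemma integrable_positive_part: "integrable M (\<lambda>\<omega>. max 0 (t - N \<omega>))"
  by (rule integrable_const_bound[where B="\<bar>t\<bar> + c"])
    (use N_bounded c_nonneg in \<open>force\<close>)+

text \<open>Pointwise, \<open>(u - N)\<^sup>+ - (s - N)\<^sup>+\<close> lies between \<open>(u - s)\<close> times the indicators of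
  \<open>N \<le> s\<close> and \<open>N \<le> u\<close>; taking expectations gives the following squeeze.\<close>
lemma shortfall_increment_bounds:
  assumes "s \<le> u"
  shows "(u - s) * F s \<le> shortfall u - shortfall s" "shortfall u - shortfall s \<le> (u - s) * F u"
proof -
  let ?I = "\<lambda>x \<omega>. indicator {\<omega> \<in> space M. N \<omega> \<le> x} \<omega> :: real"
  have diff: "shortfall u - shortfall s = (\<integral>\<omega>. max 0 (u - N \<omega>) - max 0 (s - N \<omega>) \<partial>M)"
    unfolding shortfall_def
    using Bochner_Integration.integral_diff[OF integrable_positive_part integrable_positive_part]
    by simp
  have scaled: "(u - s) * F x = (\<integral>\<omega>. (u - s) * ?I x \<omega> \<partial>M)" for x
    by (simp add: cdf_eq_integral)
  have int_ind: "integrable M (\<lambda>\<omega>. (u - s) * ?I x \<omega>)" for x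
    by (intro integrable_mult_right integrable_const_bound[where B=1]) auto
  have int_diff: "integrable M (\<lambda>\<omega>. max 0 (u - N \<omega>) - max 0 (s - N \<omega>))"
    using integrable_positive_part by simp
  show "(u - s) * F s \<le> shortfall u - shortfall s"
    unfolding diff scaled
    by (rule integral_mono) (use assms int_ind int_diff in \<open>auto simp: indicator_def\<close>)
  show "shortfall u - shortfall s \<le> (u - s) * F u"
    unfolding diff scaled
    by (rule integral_mono) (use assms int_ind int_diff in \<open>auto simp: indicator_def\<close>)
qed

lemma shortfall_mono: "s \<le> u \<Longrightarrow> shortfall s \<le> shortfall u"
  using shortfall_increment_bounds(1)[of s u] mult_nonneg_nonneg[of "u - s" "F s"] cdf_nonneg[of s]
  by linarith

lemma shortfall_1_lipschitz: "\<bar>shortfall u - shortfall s\<bar> \<le> \<bar>u - s\<bar>"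
proof -
  have "\<bar>shortfall y - shortfall x\<bar> \<le> y - x" if "x \<le> y" for x y
  proof -
    have "(y - x) * F y \<le> y - x" using that cdf_le_1[of y] by (simp add: mult_left_le)
    then show ?thesis
      using shortfall_increment_bounds[OF that] shortfall_mono[OF that] by simp
  qed
  from this[of s u] this[of u s] show ?thesis by (cases "s \<le> u") (auto simp: abs_minus_commute)
qed

lemma shortfall_eq_0: "t \<le> -c \<Longrightarrow> shortfall t = 0"
proof -
  assume t: "t \<le> -c"
  have "shortfall t = (\<integral>\<omega>. 0 \<partial>M)" unfolding shortfall_def
    by (rule Bochner_Integration.integral_cong) (use N_bounded t in force)+
  then show ?thesis by simp
qed

lemma shortfall_eq_self: "c \<le> t \<Longrightarrow> shortfall t = t"
proof -
  assume t: "c \<le> t"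
  have "shortfall t = (\<integral>\<omega>. t - N \<omega> \<partial>M)" unfolding shortfall_def
    by (rule Bochner_Integration.integral_cong) (use N_bounded t in force)+
  also have "\<dots> = t"
    using Bochner_Integration.integral_diff[OF integrable_const integrable_N] N_mean_zero
    by (simp add: prob_space)
  finally show ?thesis .
qed

lemma shortfall_linearization_error: "\<bar>shortfall y - shortfall t - (y - t) * F t\<bar> \<le> LF * (y - t)\<^sup>2"
proof -
  have bound: "(v - u) * (F v - F u) \<le> LF * (v - u)\<^sup>2" if "u \<le> v" for u v
  proof -
    have "(v - u) * (F v - F u) \<le> (v - u) * (LF * (v - u))"
      using that cdf_lipschitz_abs[of v u] by (intro mult_left_mono) auto
    also have "\<dots> = LF * (v - u)\<^sup>2" by (simp add: power2_eq_square)
    finally show ?thesis .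
  qed
  show ?thesis
  proof (cases "t \<le> y")
    case True
    then show ?thesis using shortfall_increment_bounds[OF True] bound[OF True]
      by (simp add: algebra_simps)
  next
    case False
    then have "y \<le> t" by simp
    then show ?thesis using shortfall_increment_bounds[OF \<open>y \<le> t\<close>] bound[OF \<open>y \<le> t\<close>]
      by (simp add: algebra_simps power2_commute)
  qed
qed

lemma shortfall_has_derivative: "(shortfall has_real_derivative F t) (at t)"
proof -
  have "((\<lambda>y. (shortfall y - shortfall t) / (y - t) - F t) \<longlongrightarrow> 0) (at t)"
  proof (rule Lim_null_comparison)
    have "norm ((shortfall y - shortfall t) / (y - t) - F t) \<le> LF * \<bar>y - t\<bar>" if "y \<noteq> t" for y
    proof -
      have "(shortfall y - shortfall t) / (y - t) - F t
          = (shortfall y - shortfall t - (y - t) * F t) / (y - t)"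
        using that by (simp add: field_simps)
      moreover have "\<bar>shortfall y - shortfall t - (y - t) * F t\<bar> \<le> LF * \<bar>y - t\<bar> * \<bar>y - t\<bar>"
        using shortfall_linearization_error[of y t] by (simp add: power2_eq_square)
      ultimately show ?thesis using that by (simp add: divide_le_eq)
    qed
    then show "\<forall>\<^sub>F y in at t. norm ((shortfall y - shortfall t) / (y - t) - F t) \<le> LF * \<bar>y - t\<bar>"
      by (auto simp: eventually_at_filter)
    show "((\<lambda>y. LF * \<bar>y - t\<bar>) \<longlongrightarrow> 0) (at t)"
      by (intro tendsto_eq_intros) auto
  qed
  then show ?thesis unfolding has_field_derivative_iff by (rule LIM_zero_cancel)
qed

lemma intcdf_eq_shortfall: "intcdf M N x = shortfall x"
proof -
  have zero_below: "(F has_integral 0) {..-c}"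
    by (rule has_integral_is_0) (use cdf_eq_0 in auto)
  have "(F has_integral shortfall x) {..x}"
  proof (cases "x \<le> -c")
    case True
    have "(F has_integral 0) {..x}" by (rule has_integral_is_0) (use True cdf_eq_0 in auto)
    then show ?thesis using shortfall_eq_0 True by simp
  next
    case False
    have "(F has_integral shortfall x - shortfall (-c)) {-c..x}"
      using False
      by (intro fundamental_theorem_of_calculus)
        (auto intro!: has_real_derivative_iff_has_vector_derivative[THEN iffD1]
          DERIV_subset[OF shortfall_has_derivative])
    then have "(F has_integral 0 + shortfall x) ({..-c} \<union> {-c..x})"
      using shortfall_eq_0[of "-c"]
      by (intro has_integral_Un[OF zero_below]) (auto intro: negligible_subset[of "{-c}"])
    moreover have "{..-c} \<union> {-c..x} = {..x}" using False by auto
    ultimately show ?thesis by simp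
  qed
  then show ?thesis unfolding intcdf_def by (rule integral_unique)
qed

lemma expectation_min_eq_shortfall:
  "(\<integral>\<omega>. min g (m + N \<omega>) \<partial>M) = g - shortfall (g - m)"
proof -
  have "(\<integral>\<omega>. min g (m + N \<omega>) \<partial>M) = (\<integral>\<omega>. g - max 0 (g - m - N \<omega>) \<partial>M)"
    by (rule Bochner_Integration.integral_cong) auto
  also have "\<dots> = g - shortfall (g - m)"
    using Bochner_Integration.integral_diff[OF integrable_const integrable_positive_part]
    by (simp add: shortfall_def prob_space)
  finally show ?thesis .
qed

end

locale newsvendor = bounded_noise +
  fixes a b \<gamma> :: real
  assumes a_pos: "0 < a" and b_pos: "0 < b" and c_pos: "0 < c" and LF_pos: "0 < LF"
    and inventory_lower: "2 * c < \<gamma>" and inventory_upper: "\<gamma> < a - c"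
begin

abbreviation r\<gamma> :: "real \<Rightarrow> real" where "r\<gamma> \<equiv> revenue M N a b \<gamma>"
abbreviation r\<gamma>' :: "real \<Rightarrow> real" where "r\<gamma>' \<equiv> revenue_der M N a b c \<gamma>"

text \<open>The demand at price \<open>p\<close> is censored exactly when \<open>N \<ge> threshold p\<close>.\<close>
definition threshold :: "real \<Rightarrow> real" where
  "threshold p = \<gamma> - a + b * p"

lemma threshold_diff: "threshold q - threshold p = b * (q - p)"
  by (simp add: threshold_def algebra_simps)

lemma revenue_eq_shortfall: "r\<gamma> p = p * (\<gamma> - shortfall (threshold p))"
proof -
  have "\<gamma> - (a - b * p) = threshold p" by (simp add: threshold_def)
  then show ?thesis by (simp add: revenue_def expectation_min_eq_shortfall)
qed

lemma revenue_der_eq_shortfall: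
  "r\<gamma>' p = \<gamma> - shortfall (threshold p) - b * p * F (threshold p)"
  by (simp add: revenue_der_def intcdf_eq_shortfall shortfall_eq_self threshold_def)

lemma revenue_eq_intcdf: "r\<gamma> p = p * (\<gamma> - c + intcdf M N c - intcdf M N (\<gamma> - a + b * p))"
  by (simp add: revenue_eq_shortfall intcdf_eq_shortfall shortfall_eq_self threshold_def)

lemma revenue_has_derivative: "(r\<gamma> has_real_derivative r\<gamma>' p) (at p)"
proof -
  have "r\<gamma> = (\<lambda>p. p * (\<gamma> - shortfall (threshold p)))"
    by (rule ext) (rule revenue_eq_shortfall)
  moreover have "(threshold has_real_derivative b) (at p)"
    unfolding threshold_def by (auto intro!: derivative_eq_intros)
  ultimately show ?thesis
    unfolding revenue_der_eq_shortfall
    by (auto intro!: derivative_eq_intros DERIV_chain2[OF shortfall_has_derivative]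
        simp: algebra_simps)
qed

lemma revenue_der_lipschitz: "(2 * b + a * b * LF)-lipschitz_on {0..a/b} r\<gamma>'"
proof (rule lipschitz_onI)
  show "0 \<le> 2 * b + a * b * LF" using a_pos b_pos LF_nonneg by simp
  fix p q assume p: "p \<in> {0..a/b}" and q: "q \<in> {0..a/b}"
  have split: "r\<gamma>' p - r\<gamma>' q = (shortfall (threshold q) - shortfall (threshold p))
      + b * (q - p) * F (threshold p) + b * q * (F (threshold q) - F (threshold p))"
    by (simp add: revenue_der_eq_shortfall algebra_simps)
  have dist_threshold: "\<bar>threshold q - threshold p\<bar> = b * \<bar>p - q\<bar>"
    using b_pos by (simp add: threshold_diff abs_mult abs_minus_commute)
  have "\<bar>shortfall (threshold q) - shortfall (threshold p)\<bar> \<le> b * \<bar>p - q\<bar>"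
    using shortfall_1_lipschitz dist_threshold by metis
  moreover have "\<bar>b * (q - p) * F (threshold p)\<bar> \<le> b * \<bar>p - q\<bar>"
    using b_pos cdf_nonneg[of "threshold p"] cdf_le_1[of "threshold p"]
    by (simp add: abs_mult abs_minus_commute mult_left_le)
  moreover have "\<bar>b * q * (F (threshold q) - F (threshold p))\<bar> \<le> a * (LF * (b * \<bar>p - q\<bar>))"
  proof -
    have "\<bar>b * q * (F (threshold q) - F (threshold p))\<bar> = (b * q) * \<bar>F (threshold q) - F (threshold p)\<bar>"
      using b_pos q by (simp add: abs_mult)
    also have "\<dots> \<le> a * (LF * (b * \<bar>p - q\<bar>))"
      using q a_pos b_pos cdf_lipschitz_abs[of "threshold q" "threshold p"] dist_threshold
      by (intro mult_mono) (auto simp: field_simps)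
    finally show ?thesis .
  qed
  ultimately have "\<bar>r\<gamma>' p - r\<gamma>' q\<bar> \<le> b * \<bar>p - q\<bar> + b * \<bar>p - q\<bar> + a * (LF * (b * \<bar>p - q\<bar>))"
    unfolding split by linarith
  then show "dist (r\<gamma>' p) (r\<gamma>' q) \<le> (2 * b + a * b * LF) * dist p q"
    by (simp add: dist_real_def algebra_simps)
qed

lemma revenue_der_decrement:
  assumes "0 \<le> p" "p \<le> q"
  shows "b * (q - p) * (F (threshold p) + F (threshold q)) \<le> r\<gamma>' p - r\<gamma>' q"
proof -
  have le: "threshold p \<le> threshold q" using assms b_pos by (simp add: threshold_def)
  have "r\<gamma>' p - r\<gamma>' q = (shortfall (threshold q) - shortfall (threshold p))
      + b * (q * F (threshold q) - p * F (threshold p))"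
    by (simp add: revenue_der_eq_shortfall algebra_simps)
  moreover have "b * (q - p) * F (threshold p) \<le> shortfall (threshold q) - shortfall (threshold p)"
    using shortfall_increment_bounds(1)[OF le] by (simp add: threshold_diff)
  moreover have "p * F (threshold p) \<le> p * F (threshold q)"
    using assms cdf_mono[OF le] by (intro mult_left_mono) auto
  then have "b * ((q - p) * F (threshold q)) \<le> b * (q * F (threshold q) - p * F (threshold p))"
    using b_pos by (intro mult_left_mono) (auto simp: algebra_simps)
  ultimately show ?thesis by (simp add: algebra_simps)
qed

lemma revenue_der_antimono:
  assumes "0 \<le> p" "p \<le> q"
  shows "r\<gamma>' q \<le> r\<gamma>' p"
proof -
  have "0 \<le> b * (q - p) * (F (threshold p) + F (threshold q))"
    using assms b_pos cdf_nonneg by simp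
  then show ?thesis using revenue_der_decrement[OF assms] by linarith
qed

lemma revenue_der_at_0: "r\<gamma>' 0 = \<gamma>"
  using inventory_upper by (simp add: revenue_der_eq_shortfall threshold_def shortfall_eq_0)

lemma revenue_der_at_a_div_b: "r\<gamma>' (a / b) = -a"
  using inventory_lower c_pos b_pos
  by (simp add: revenue_der_eq_shortfall threshold_def shortfall_eq_self cdf_eq_1)

lemma critical_price_exists: "\<exists>p. 0 < p \<and> p < a / b \<and> r\<gamma>' p = 0"
proof -
  have "continuous_on {0..a/b} r\<gamma>'"
    by (rule lipschitz_on_continuous_on[OF revenue_der_lipschitz])
  then obtain p where p: "0 \<le> p" "p \<le> a / b" "r\<gamma>' p = 0"
    using IVT2'[of r\<gamma>' "a/b" 0 0] revenue_der_at_0 revenue_der_at_a_div_b a_pos b_pos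
      inventory_lower c_pos by auto
  moreover have "p \<noteq> 0" "p \<noteq> a / b"
    using p revenue_der_at_0 revenue_der_at_a_div_b inventory_lower c_pos a_pos by auto
  ultimately show ?thesis by (auto intro!: exI[of _ p])
qed

text \<open>The bound does not depend on \<open>\<gamma>\<close>; this is what makes \<open>C\<^sub>\<epsilon>\<close> uniform.\<close>
lemma cdf_at_critical_price:
  assumes "0 \<le> p" "p \<le> a / b" "r\<gamma>' p = 0"
  shows "c / a \<le> F (threshold p)"
proof (cases "threshold p \<le> c")
  case True
  have "shortfall (threshold p) \<le> c"
    using shortfall_mono[OF True] shortfall_eq_self[of c] by simp
  then have "\<gamma> - c \<le> b * p * F (threshold p)"
    using assms(3) by (simp add: revenue_der_eq_shortfall)
  also have "\<dots> \<le> a * F (threshold p)"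
    using assms b_pos cdf_nonneg by (intro mult_right_mono) (auto simp: field_simps)
  finally show ?thesis
    using inventory_lower a_pos by (simp add: divide_le_eq mult.commute)
next
  case False
  then show ?thesis using cdf_eq_1 a_pos inventory_lower inventory_upper c_pos by simp
qed

lemma critical_price_unique:
  assumes "0 \<le> p" "p \<le> a / b" "r\<gamma>' p = 0" "0 \<le> q" "q \<le> a / b" "r\<gamma>' q = 0"
  shows "p = q"
proof -
  have False if "0 \<le> x" "x < y" "y \<le> a / b" "r\<gamma>' x = 0" "r\<gamma>' y = 0" for x y
  proof -
    have "0 < c / a" using a_pos c_pos by simp
    then have "0 < F (threshold x) + F (threshold y)"
      using cdf_at_critical_price[of x] cdf_nonneg[of "threshold y"] that by simp
    then have "0 < b * (y - x) * (F (threshold x) + F (threshold y))"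
      using b_pos that by simp
    then show False using revenue_der_decrement[of x y] that by simp
  qed
  then show ?thesis using assms by (cases p q rule: linorder_cases) blast+
qed

lemma revenue_mono_below_critical:
  assumes "0 \<le> p" "p \<le> q" "q \<le> ps" "r\<gamma>' ps = 0"
  shows "r\<gamma> p \<le> r\<gamma> q"
proof (rule DERIV_nonneg_imp_nondecreasing[OF assms(2)])
  fix x assume "p \<le> x" "x \<le> q"
  then have "0 \<le> r\<gamma>' x" using revenue_der_antimono[of x ps] assms by simp
  then show "\<exists>y. (r\<gamma> has_real_derivative y) (at x) \<and> 0 \<le> y"
    using revenue_has_derivative by blast
qed

lemma revenue_antimono_above_critical:
  assumes "0 \<le> ps" "ps \<le> p" "p \<le> q" "r\<gamma>' ps = 0"
  shows "r\<gamma> q \<le> r\<gamma> p"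
proof (rule DERIV_nonpos_imp_nonincreasing[OF assms(3)])
  fix x assume "p \<le> x" "x \<le> q"
  then have "r\<gamma>' x \<le> 0" using revenue_der_antimono[of ps x] assms by simp
  then show "\<exists>y. (r\<gamma> has_real_derivative y) (at x) \<and> y \<le> 0"
    using revenue_has_derivative by blast
qed

lemma revenue_gap_quadratic:
  assumes "ps \<in> {0..a/b}" "r\<gamma>' ps = 0" "p \<in> {0..a/b}"
  shows "r\<gamma> ps - r\<gamma> p \<le> (2 * b + a * b * LF) / 2 * (ps - p)\<^sup>2"
  using revenue_has_derivative revenue_der_lipschitz assms
  by (rule lipschitz_derivative_gap_at_critical_point)

lemma revenue_der_strongly_decreasing:
  assumes "0 \<le> p" "p \<le> q" "c / (2 * a) \<le> F (threshold p)" "c / (2 * a) \<le> F (threshold q)"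
  shows "b * c / a * (q - p) \<le> r\<gamma>' p - r\<gamma>' q"
proof -
  have "c / a \<le> F (threshold p) + F (threshold q)" using assms(3,4) by simp
  then have "b * (q - p) * (c / a) \<le> b * (q - p) * (F (threshold p) + F (threshold q))"
    using assms(2) b_pos by (intro mult_left_mono) auto
  moreover have "b * c / a * (q - p) = b * (q - p) * (c / a)" by simp
  ultimately show ?thesis using revenue_der_decrement[OF assms(1,2)] by linarith
qed

lemma cdf_near_critical_price:
  assumes "0 \<le> ps" "ps \<le> a / b" "r\<gamma>' ps = 0" "\<bar>p - ps\<bar> \<le> c / (2 * a * b * LF)"
  shows "c / (2 * a) \<le> F (threshold p)"
proof -
  have "\<bar>F (threshold p) - F (threshold ps)\<bar> \<le> LF * \<bar>threshold p - threshold ps\<bar>"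
    by (rule cdf_lipschitz_abs)
  also have "\<dots> = LF * b * \<bar>p - ps\<bar>"
    using b_pos by (simp add: threshold_diff abs_mult)
  also have "\<dots> \<le> LF * b * (c / (2 * a * b * LF))"
    using assms(4) b_pos LF_pos by (intro mult_left_mono) auto
  also have "\<dots> = c / (2 * a)" using b_pos LF_pos by simp
  finally show ?thesis using cdf_at_critical_price[OF assms(1-3)] by simp
qed

lemma critical_neighbourhood:
  assumes ps: "0 < ps" "ps < a / b" "r\<gamma>' ps = 0"
  obtains \<epsilon> where "0 < \<epsilon>" "\<epsilon> \<le> min ps (a / b - ps)"
    "\<And>p q. p \<in> {ps - \<epsilon>..ps + \<epsilon>} \<Longrightarrow> q \<in> {ps - \<epsilon>..ps + \<epsilon>} \<Longrightarrow>
      b * c / a * \<bar>p - q\<bar> \<le> \<bar>r\<gamma>' p - r\<gamma>' q\<bar>"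
    "\<And>p. p \<in> {ps - \<epsilon><..<ps + \<epsilon>} \<Longrightarrow>
      r\<gamma> ps - r\<gamma> p \<le> (2 * b + a * b * LF) / 2 / (b * c / a)\<^sup>2 * (r\<gamma>' p)\<^sup>2"
proof -
  define \<epsilon> where "\<epsilon> = min (min ps (a / b - ps)) (c / (2 * a * b * LF))"
  have "0 < \<epsilon>" using ps a_pos b_pos c_pos LF_pos by (simp add: \<epsilon>_def)
  have "\<epsilon> \<le> min ps (a / b - ps)" unfolding \<epsilon>_def by (rule min.cobounded1)
  have near: "0 \<le> p \<and> p \<le> a / b \<and> c / (2 * a) \<le> F (threshold p)"
    if "p \<in> {ps - \<epsilon>..ps + \<epsilon>}" for p
  proof -
    have "\<bar>p - ps\<bar> \<le> \<epsilon>" using that by (simp add: abs_le_iff)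
    moreover have "\<epsilon> \<le> c / (2 * a * b * LF)" unfolding \<epsilon>_def by (rule min.cobounded2)
    ultimately show ?thesis
      using that ps \<open>\<epsilon> \<le> min ps (a / b - ps)\<close> cdf_near_critical_price[of ps p] by auto
  qed
  have strong: "b * c / a * \<bar>p - q\<bar> \<le> \<bar>r\<gamma>' p - r\<gamma>' q\<bar>"
    if "p \<in> {ps - \<epsilon>..ps + \<epsilon>}" "q \<in> {ps - \<epsilon>..ps + \<epsilon>}" for p q
  proof -
    have "b * c / a * \<bar>x - y\<bar> \<le> \<bar>r\<gamma>' x - r\<gamma>' y\<bar>"
      if "x \<in> {ps - \<epsilon>..ps + \<epsilon>}" "y \<in> {ps - \<epsilon>..ps + \<epsilon>}" "x \<le> y" for x y
      using revenue_der_strongly_decreasing[of x y] near[OF that(1)] near[OF that(2)] that(3)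
      by (simp add: abs_minus_commute[of x y])
    from this[of p q] this[of q p] that show ?thesis
      by (cases "p \<le> q") (auto simp: abs_minus_commute)
  qed
  have "r\<gamma> ps - r\<gamma> p \<le> (2 * b + a * b * LF) / 2 / (b * c / a)\<^sup>2 * (r\<gamma>' p)\<^sup>2"
    if "p \<in> {ps - \<epsilon><..<ps + \<epsilon>}" for p
  proof (rule quadratic_gap_le_scaled_square)
    show "r\<gamma> ps - r\<gamma> p \<le> (2 * b + a * b * LF) / 2 * (ps - p)\<^sup>2"
      using that near[of p] near[of ps] \<open>0 < \<epsilon>\<close> ps(3) by (intro revenue_gap_quadratic) auto
    show "b * c / a * \<bar>ps - p\<bar> \<le> \<bar>r\<gamma>' p\<bar>"
      using strong[of ps p] that \<open>0 < \<epsilon>\<close> ps(3) by simp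
    show "0 < b * c / a" "0 \<le> (2 * b + a * b * LF) / 2"
      using a_pos b_pos c_pos LF_pos by simp_all
  qed
  with that \<open>0 < \<epsilon>\<close> \<open>\<epsilon> \<le> min ps (a / b - ps)\<close> strong show ?thesis by blast
qed

end

theorem lemma1:
  fixes a b c LF :: real
  assumes "a > 0" and "b > 0" and "c > 0" and "LF > 0"
  shows "\<exists>C\<epsilon> > 0. \<forall>(M :: 'a measure) (N :: 'a \<Rightarrow> real) (\<gamma> :: real).
    (prob_space M \<and> N \<in> borel_measurable M \<and> (\<forall>\<omega>\<in>space M. -c \<le> N \<omega> \<and> N \<omega> \<le> c)
     \<and> (\<integral>\<omega>. N \<omega> \<partial>M) = 0 \<and> LF-lipschitz_on UNIV (cdfN M N)
     \<and> 2 * c < \<gamma> \<and> \<gamma> < a - c) \<longrightarrow>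
    (let r = revenue M N a b \<gamma>; r' = revenue_der M N a b c \<gamma>;
         F = cdfN M N; G = intcdf M N;
         Lr = 2 * b + a * b * LF; Cs = Lr / 2; Cv = Cs / C\<epsilon>\<^sup>2 in
      (\<forall>p\<ge>0. r p = p * (\<gamma> - c + G c - G (\<gamma> - a + b * p))
              \<and> (r has_real_derivative r' p) (at p within {0..}))
      \<and> Lr-lipschitz_on {0..a/b} r'
      \<and> (\<forall>p q. 0 \<le> p \<and> p \<le> q \<longrightarrow> r' q \<le> r' p)
      \<and> (\<exists>ps. 0 < ps \<and> ps < a/b \<and> r' ps = 0
             \<and> (\<forall>q. 0 < q \<and> q < a/b \<and> r' q = 0 \<longrightarrow> q = ps)
             \<and> (\<forall>p q. 0 \<le> p \<and> p \<le> q \<and> q \<le> ps \<longrightarrow> r p \<le> r q)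
             \<and> (\<forall>p q. ps \<le> p \<and> p \<le> q \<and> q \<le> a/b \<longrightarrow> r q \<le> r p)
             \<and> (\<forall>p. 0 \<le> p \<and> p \<le> a/b \<longrightarrow> r ps - r p \<le> Cs * (ps - p)\<^sup>2)
             \<and> (\<exists>\<epsilon>. 0 < \<epsilon> \<and> \<epsilon> \<le> min ps (a/b - ps)
                   \<and> (\<forall>p1 p2. p1 \<in> {ps - \<epsilon>..ps + \<epsilon>} \<and> p2 \<in> {ps - \<epsilon>..ps + \<epsilon>}
                              \<longrightarrow> \<bar>r' p1 - r' p2\<bar> \<ge> C\<epsilon> * \<bar>p1 - p2\<bar>)
                   \<and> (\<forall>p. p \<in> {ps - \<epsilon><..<ps + \<epsilon>} \<longrightarrow> r ps - r p \<le> Cv * (r' p)\<^sup>2))))"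
proof (intro exI[of _ "b * c / a"] conjI allI impI, goal_cases)
  case 1
  show ?case using assms by simp
next
  case (2 M N \<gamma>)
  interpret newsvendor M N c LF a b \<gamma>
    using 2 assms
    unfolding newsvendor_def newsvendor_axioms_def bounded_noise_def bounded_noise_axioms_def
    by blast
  obtain ps where ps: "0 < ps" "ps < a / b" "r\<gamma>' ps = 0"
    using critical_price_exists by blast
  obtain \<epsilon> where \<epsilon>: "0 < \<epsilon>" "\<epsilon> \<le> min ps (a / b - ps)"
    "\<And>p q. p \<in> {ps - \<epsilon>..ps + \<epsilon>} \<Longrightarrow> q \<in> {ps - \<epsilon>..ps + \<epsilon>} \<Longrightarrow>
      b * c / a * \<bar>p - q\<bar> \<le> \<bar>r\<gamma>' p - r\<gamma>' q\<bar>"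
    "\<And>p. p \<in> {ps - \<epsilon><..<ps + \<epsilon>} \<Longrightarrow>
      r\<gamma> ps - r\<gamma> p \<le> (2 * b + a * b * LF) / 2 / (b * c / a)\<^sup>2 * (r\<gamma>' p)\<^sup>2"
    using critical_neighbourhood[OF ps] by blast
  show ?case
    unfolding Let_def
  proof (intro conjI allI impI, goal_cases)
    case (2 p)
    show ?case by (rule has_field_derivative_at_within[OF revenue_has_derivative])
  next
    case (4 p q)
    then show ?case using revenue_der_antimono[of p q] by simp
  next
    case 5
    show ?case
    proof (rule exI[of _ ps], intro conjI allI impI, goal_cases)
      case (4 q)
      then show ?case using critical_price_unique[of q ps] ps by simp
    next
      case (5 p q)
      then show ?case using revenue_mono_below_critical[of p q ps] ps by simp
    next
      case (6 p q)
      then show ?case using revenue_antimono_above_critical[of ps p q] ps by simp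
    next
      case (7 p)
      then show ?case using revenue_gap_quadratic[of ps p] ps by simp
    next
      case 8
      show ?case using \<epsilon>(1,2) \<epsilon>(3,4)[simplified] by (intro exI[of _ \<epsilon>] conjI allI impI) simp_all
    qed (use ps in simp_all)
  qed (simp_all add: revenue_eq_intcdf revenue_der_lipschitz)
qed

end
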